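(* Let $U=\{u_1,\dots,u_{2^m}\}\subseteq\mathbb{F}_2^n\setminus\{0\}$ be a set of $2^m$ distinct nonzero vectors, let $B:\mathbb{F}_2^n\to\mathbb{F}_2^m$ be a uniformly random linear map, fix $y\in\mathbb{F}_2^m$, and let $Z_y:=|\{i:Bu_i=y\}|$. Then for every integer $a\ge1$, \[ \Pr[Z_y>2^a-2]\le\gamma^{-1}2^{-a^2}, \] where $\gamma:=\prod_{j=1}^\infty(1-2^{-j})$.
   Context: A uniformly random linear map $\mathbb{F}_2^n\to\mathbb{F}_2^m$ is one chosen uniformly among all linear maps. *)

theory Defs
  imports "HOL-Probability.Probability"
begin

text \<open>Vectors of F_2^n: functions nat => bool (True = 1), zero outside {0..<n}.\<close>
definition F2vec :: "nat \<Rightarrow> (nat \<Rightarrow> bool) set" where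
  "F2vec n = {v. \<forall>i\<ge>n. \<not> v i}"

definition F2zero :: "nat \<Rightarrow> bool" where
  "F2zero = (\<lambda>_. False)"

definition F2add :: "(nat \<Rightarrow> bool) \<Rightarrow> (nat \<Rightarrow> bool) \<Rightarrow> (nat \<Rightarrow> bool)" where
  "F2add x z = (\<lambda>i. x i \<noteq> z i)"

text \<open>Linear maps F_2^n -> F_2^m (as extensional functions on the carrier).
  Over F_2 linearity is just additivity (scalars are 0 and 1).\<close>
definition F2lin :: "nat \<Rightarrow> nat \<Rightarrow> ((nat \<Rightarrow> bool) \<Rightarrow> (nat \<Rightarrow> bool)) set" where
  "F2lin n m = {f \<in> F2vec n \<rightarrow>\<^sub>E F2vec m.
     \<forall>x\<in>F2vec n. \<forall>z\<in>F2vec n. f (F2add x z) = F2add (f x) (f z)}"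

definition gamma2 :: real where
  "gamma2 = (\<Prod>j. 1 - (1/2::real) ^ Suc j)"

end

theory Submission
  imports Defs
begin

text \<open>
  Count the ordered linearly independent \<open>a\<close>-tuples of vectors of \<open>U\<close> that \<open>B\<close> maps
  entirely to \<open>y\<close>. If \<open>Z\<^sub>y \<ge> 2 ^ a - 1\<close>, the fibre \<open>{u \<in> U. B u = y}\<close> consists of at
  least \<open>2 ^ a - 1\<close> nonzero vectors; as the span of \<open>j\<close> vectors contains at most \<open>2 ^ j - 1\<close>
  nonzero vectors, the fibre then contains at least \<open>\<Prod>j<a. 2 ^ a - 2 ^ j\<close> such tuples, and
  this product is at least \<open>\<gamma> * 2 ^ a\<^sup>2\<close>. On the other hand a fixed independent tuple is
  mapped to \<open>(y, \<dots>, y)\<close> with probability exactly \<open>2 ^ (- m * a)\<close>, and \<open>U\<close> has only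
  \<open>2 ^ (m * a)\<close> tuples of length \<open>a\<close>, so the expected count is at most 1 and Markov's
  inequality gives the bound. The exact probability comes from the rank-one updates
  \<open>B + f \<otimes> w\<close>, where \<open>f\<close> is a linear functional vanishing on the earlier vectors of the tuple
  but not on the next one: they fix the earlier values and shift the next one by \<open>w\<close>, so all
  fibres of the next value have the same size.
\<close>

lemma F2add_commute: "F2add x z = F2add z x"
  by (auto simp: F2add_def fun_eq_iff)

lemma F2add_assoc: "F2add (F2add x z) w = F2add x (F2add z w)"
  by (auto simp: F2add_def fun_eq_iff)

lemma F2add_left_commute: "F2add x (F2add z w) = F2add z (F2add x w)"
  by (auto simp: F2add_def fun_eq_iff)

lemmas F2add_ac = F2add_assoc F2add_commute F2add_left_commute

lemma F2add_self [simp]: "F2add x x = F2zero"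
  by (auto simp: F2add_def F2zero_def fun_eq_iff)

lemma F2add_F2zero [simp]: "F2add x F2zero = x" "F2add F2zero x = x"
  by (auto simp: F2add_def F2zero_def fun_eq_iff)

lemma F2add_cancel [simp]: "F2add x (F2add x z) = z" "F2add (F2add z x) x = z"
  by (auto simp: F2add_def fun_eq_iff)

lemma F2add_closed [intro]: "x \<in> F2vec n \<Longrightarrow> z \<in> F2vec n \<Longrightarrow> F2add x z \<in> F2vec n"
  by (auto simp: F2add_def F2vec_def)

lemma F2zero_in_F2vec [simp, intro]: "F2zero \<in> F2vec n"
  by (auto simp: F2zero_def F2vec_def)

lemma F2vec_eq_image_Pow: "F2vec n = (\<lambda>S i. i \<in> S) ` Pow {..<n}"
proof -
  have "v \<in> (\<lambda>S i. i \<in> S) ` Pow {..<n}" if "v \<in> F2vec n" for v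
    using that by (intro image_eqI[of _ _ "{i. v i}"]) (auto simp: F2vec_def not_le[symmetric])
  then show ?thesis by (auto simp: F2vec_def)
qed

lemma finite_F2vec [simp]: "finite (F2vec n)"
  by (simp add: F2vec_eq_image_Pow)

lemma card_F2vec: "card (F2vec n) = 2 ^ n"
proof -
  have "inj_on (\<lambda>S i. i \<in> S) (Pow {..<n})"
    by (auto simp: inj_on_def fun_eq_iff)
  then show ?thesis by (simp add: F2vec_eq_image_Pow card_image card_Pow)
qed

inductive_set F2span :: "(nat \<Rightarrow> bool) set \<Rightarrow> (nat \<Rightarrow> bool) set" for A where
  F2span_zero [simp, intro]: "F2zero \<in> F2span A"
| F2span_add_base: "a \<in> A \<Longrightarrow> x \<in> F2span A \<Longrightarrow> F2add a x \<in> F2span A"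

lemma F2span_base: "a \<in> A \<Longrightarrow> a \<in> F2span A"
  using F2span_add_base[of a A F2zero] by simp

lemma F2span_add: "x \<in> F2span A \<Longrightarrow> z \<in> F2span A \<Longrightarrow> F2add x z \<in> F2span A"
  by (induction x rule: F2span.induct) (auto simp: F2add_assoc intro: F2span_add_base)

lemma F2span_mono: "A \<subseteq> B \<Longrightarrow> F2span A \<subseteq> F2span B"
proof
  show "x \<in> F2span B" if "x \<in> F2span A" "A \<subseteq> B" for x
    using that by (induction x rule: F2span.induct) (auto intro: F2span_add_base)
qed

lemma F2span_empty: "F2span {} = {F2zero}"
proof -
  have "x = F2zero" if "x \<in> F2span {}" for x
    using that by (induction x rule: F2span.induct) auto
  then show ?thesis by auto
qed

lemma F2span_insert_subset: "F2span (insert a A) \<subseteq> F2span A \<union> F2add a ` F2span A"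
proof
  fix x assume "x \<in> F2span (insert a A)"
  then show "x \<in> F2span A \<union> F2add a ` F2span A"
  proof (induction x rule: F2span.induct)
    case (F2span_add_base b x)
    consider "b = a" | "b \<in> A" "x \<in> F2span A" | x' where "b \<in> A" "x' \<in> F2span A" "x = F2add a x'"
      using F2span_add_base by auto
    then show ?case
    proof cases
      case 1
      with F2span_add_base.IH show ?thesis by (auto simp flip: F2add_assoc)
    next
      case 2
      then show ?thesis by (auto intro: F2span.F2span_add_base)
    next
      case 3
      then have "F2add b x = F2add a (F2add b x')"
        by (metis F2add_assoc F2add_commute)
      with 3 show ?thesis by (auto intro: F2span.F2span_add_base)
    qed
  qed auto
qed

lemma finite_F2span: "finite A \<Longrightarrow> finite (F2span A)"
  by (induction A rule: finite_induct)
     (auto simp: F2span_empty intro: finite_subset[OF F2span_insert_subset])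

lemma card_F2span_le: "finite A \<Longrightarrow> card (F2span A) \<le> 2 ^ card A"
proof (induction A rule: finite_induct)
  case (insert a A)
  have "card (F2span (insert a A)) \<le> card (F2span A \<union> F2add a ` F2span A)"
    using insert.hyps(1) by (intro card_mono F2span_insert_subset) (simp add: finite_F2span)
  also have "\<dots> \<le> card (F2span A) + card (F2add a ` F2span A)"
    by (rule card_Un_le)
  also have "\<dots> \<le> 2 * card (F2span A)"
    using card_image_le[OF finite_F2span[OF insert.hyps(1)], of "F2add a"] by simp
  finally show ?case using insert by simp
qed (simp add: F2span_empty)

lemma F2span_image:
  assumes additive: "\<And>x z. g (F2add x z) = F2add (g x) (g z)"
  shows "F2span (g ` A) \<subseteq> g ` F2span A"
proof
  fix w assume "w \<in> F2span (g ` A)"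
  then show "w \<in> g ` F2span A"
  proof (induction w rule: F2span.induct)
    case F2span_zero
    have "g F2zero = F2zero" using additive[of F2zero F2zero] by simp
    then show ?case by force
  next
    case (F2span_add_base b x)
    then obtain a x' where "a \<in> A" "b = g a" "x' \<in> F2span A" "x = g x'" by auto
    then show ?case
      using additive by (auto intro!: image_eqI[of _ _ "F2add a x'"] F2span.F2span_add_base)
  qed
qed

definition F2indep :: "(nat \<Rightarrow> bool) list \<Rightarrow> bool" where
  "F2indep vs \<longleftrightarrow> (\<forall>i<length vs. vs ! i \<notin> F2span (set (take i vs)))"

lemma F2indep_Nil [simp]: "F2indep []"
  by (simp add: F2indep_def)

lemma F2indep_snoc: "F2indep (vs @ [v]) \<longleftrightarrow> F2indep vs \<and> v \<notin> F2span (set vs)"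
  unfolding F2indep_def by (auto simp: nth_append less_Suc_eq)

section \<open>Separating functionals\<close>

definition F2functional :: "nat \<Rightarrow> ((nat \<Rightarrow> bool) \<Rightarrow> bool) \<Rightarrow> bool" where
  "F2functional n f \<longleftrightarrow> (\<forall>x\<in>F2vec n. \<forall>z\<in>F2vec n. f (F2add x z) = (f x \<noteq> f z))"

lemma F2functional_zero: "F2functional n f \<Longrightarrow> \<not> f F2zero"
  unfolding F2functional_def using F2add_self[of F2zero] F2zero_in_F2vec[of n] by metis

text \<open>Adding \<open>w\<close> to the vectors with \<open>p\<close>-th coordinate set, where \<open>w p\<close> holds, is a linear
  projection with kernel \<open>{0, w}\<close>.\<close>
lemma F2_projection_exists:
  assumes w: "w \<in> F2vec n" "w \<noteq> F2zero"
  obtains \<pi> where "\<And>x z. \<pi> (F2add x z) = F2add (\<pi> x) (\<pi> z)" "\<And>x. x \<in> F2vec n \<Longrightarrow> \<pi> x \<in> F2vec n"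
    "\<pi> w = F2zero" "\<And>x. \<pi> x = F2zero \<Longrightarrow> x = F2zero \<or> x = w"
proof -
  obtain p where p: "w p" using w(2) by (auto simp: F2zero_def)
  define \<pi> where "\<pi> x = (if x p then F2add x w else x)" for x
  show thesis
  proof (rule that[of \<pi>])
    show "\<pi> (F2add x z) = F2add (\<pi> x) (\<pi> z)" for x z
      by (auto simp: \<pi>_def F2add_def fun_eq_iff)
    show "\<pi> x \<in> F2vec n" if "x \<in> F2vec n" for x
      using that w(1) by (auto simp: \<pi>_def)
    show "\<pi> w = F2zero"
      using p by (simp add: \<pi>_def)
    show "x = F2zero \<or> x = w" if "\<pi> x = F2zero" for x
      using that by (auto simp: \<pi>_def split: if_splits) (metis F2add_cancel(2) F2add_F2zero(2))
  qed
qed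

lemma F2_projection_not_in_F2span:
  assumes additive: "\<And>x z. \<pi> (F2add x z) = F2add (\<pi> x) (\<pi> z)"
    and kernel: "\<And>x. \<pi> x = F2zero \<Longrightarrow> x = F2zero \<or> x = w"
    and v: "v \<notin> F2span (insert w A)"
  shows "\<pi> v \<notin> F2span (\<pi> ` A)"
proof
  assume "\<pi> v \<in> F2span (\<pi> ` A)"
  then have "\<pi> v \<in> \<pi> ` F2span A"
    by (rule subsetD[OF F2span_image[OF additive]])
  then obtain x where x: "x \<in> F2span A" "\<pi> x = \<pi> v"
    by (metis imageE)
  then have "\<pi> (F2add x v) = F2zero"
    by (simp add: additive)
  then have "F2add x v = F2zero \<or> F2add x v = w"
    by (rule kernel)
  then have "v = x \<or> v = F2add w x"
    by (metis F2add_cancel(1) F2add_commute F2add_F2zero(1))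
  moreover have "x \<in> F2span (insert w A)" "w \<in> F2span (insert w A)"
    using x(1) F2span_mono[of A "insert w A"] by (auto intro: F2span_base)
  ultimately have "v \<in> F2span (insert w A)"
    using F2span_add by auto
  with v show False ..
qed

text \<open>Induction on \<open>card A\<close>: projecting along some nonzero \<open>w \<in> A\<close> lowers \<open>card A\<close>, keeps \<open>v\<close>
  outside the span, and a separating functional pulls back along the projection.\<close>
lemma F2functional_separating:
  assumes "finite A" "A \<subseteq> F2vec n" "v \<in> F2vec n" "v \<notin> F2span A"
  obtains f where "F2functional n f" "f v" "\<forall>u\<in>A. \<not> f u"
  using assms
proof (induction "card A" arbitrary: A v thesis rule: less_induct)
  case less
  show ?case
  proof (cases "A = {}")
    case True
    then obtain p where "v p"
      using less.prems(5) by (auto simp: F2span_empty F2zero_def)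
    then show ?thesis
      by (intro less.prems(1)[of "\<lambda>x. x p"]) (auto simp: F2functional_def F2add_def True)
  next
    case False
    then obtain w A' where A: "A = insert w A'" "w \<notin> A'"
      by (metis Set.set_insert ex_in_conv)
    have A': "card A' < card A" "finite A'" "A' \<subseteq> F2vec n"
      using less.prems(2,3) A by auto
    show ?thesis
    proof (cases "w = F2zero")
      case True
      have "v \<notin> F2span A'"
        using less.prems(5) F2span_mono[of A' A] A by auto
      then obtain f where "F2functional n f" "f v" "\<forall>u\<in>A'. \<not> f u"
        using less.hyps[OF A'(1) _ A'(2,3) less.prems(4)] by blast
      then show ?thesis
        using less.prems(1) A True F2functional_zero by blast
    next
      case False
      obtain \<pi> where \<pi>: "\<And>x z. \<pi> (F2add x z) = F2add (\<pi> x) (\<pi> z)"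
          "\<And>x. x \<in> F2vec n \<Longrightarrow> \<pi> x \<in> F2vec n" "\<pi> w = F2zero"
          "\<And>x. \<pi> x = F2zero \<Longrightarrow> x = F2zero \<or> x = w"
        using F2_projection_exists[of w n] False less.prems(3) A by auto
      have "card (\<pi> ` A') < card A"
        using A' card_image_le[of A' \<pi>] by linarith
      moreover have "\<pi> v \<notin> F2span (\<pi> ` A')"
        using F2_projection_not_in_F2span[OF \<pi>(1,4)] less.prems(5) A(1) by simp
      moreover have "\<pi> ` A' \<subseteq> F2vec n" "\<pi> v \<in> F2vec n"
        using A'(3) less.prems(4) \<pi>(2) by auto
      ultimately obtain f where f: "F2functional n f" "f (\<pi> v)" "\<forall>u\<in>\<pi> ` A'. \<not> f u"
        using less.hyps[of "\<pi> ` A'"] A'(2) by blast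
      have "F2functional n (f \<circ> \<pi>)"
        using f(1) \<pi>(1,2) by (auto simp: F2functional_def)
      moreover have "\<not> f (\<pi> w)"
        using \<pi>(3) F2functional_zero[OF f(1)] by simp
      ultimately show ?thesis
        using less.prems(1)[of "f \<circ> \<pi>"] f A(1) by auto
    qed
  qed
qed

section \<open>Random linear maps on independent tuples\<close>

lemma finite_F2lin: "finite (F2lin n m)"
proof (rule finite_subset)
  show "F2lin n m \<subseteq> F2vec n \<rightarrow>\<^sub>E F2vec m" by (auto simp: F2lin_def)
qed (simp add: finite_PiE)

lemma F2lin_nonempty: "F2lin n m \<noteq> {}"
proof -
  have "(\<lambda>x. if x \<in> F2vec n then F2zero else undefined) \<in> F2lin n m"
    by (auto simp: F2lin_def)
  then show ?thesis by blast
qed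

lemma F2lin_apply_in_F2vec: "B \<in> F2lin n m \<Longrightarrow> x \<in> F2vec n \<Longrightarrow> B x \<in> F2vec m"
  unfolding F2lin_def by (blast dest: PiE_mem)

lemma F2lin_add:
  "B \<in> F2lin n m \<Longrightarrow> x \<in> F2vec n \<Longrightarrow> z \<in> F2vec n \<Longrightarrow> B (F2add x z) = F2add (B x) (B z)"
  unfolding F2lin_def by blast

definition F2shift :: "nat \<Rightarrow> ((nat \<Rightarrow> bool) \<Rightarrow> bool) \<Rightarrow> (nat \<Rightarrow> bool)
    \<Rightarrow> ((nat \<Rightarrow> bool) \<Rightarrow> (nat \<Rightarrow> bool)) \<Rightarrow> ((nat \<Rightarrow> bool) \<Rightarrow> (nat \<Rightarrow> bool))" where
  "F2shift n f w B = (\<lambda>x. if x \<in> F2vec n then if f x then F2add (B x) w else B x else undefined)"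

lemma F2shift_in_F2lin:
  assumes f: "F2functional n f" and B: "B \<in> F2lin n m" and w: "w \<in> F2vec m"
  shows "F2shift n f w B \<in> F2lin n m"
  unfolding F2lin_def
proof (intro CollectI conjI ballI)
  show "F2shift n f w B \<in> F2vec n \<rightarrow>\<^sub>E F2vec m"
    using B w by (auto simp: F2shift_def F2lin_apply_in_F2vec intro!: F2add_closed)
  fix x z assume xz: "x \<in> F2vec n" "z \<in> F2vec n"
  have "f (F2add x z) = (f x \<noteq> f z)"
    using f xz by (simp add: F2functional_def)
  then show "F2shift n f w B (F2add x z) = F2add (F2shift n f w B x) (F2shift n f w B z)"
    using xz F2add_closed[OF xz] F2lin_add[OF B xz]
    by (cases "f x"; cases "f z") (simp_all add: F2shift_def F2add_ac)
qed

lemma F2shift_F2shift: "B \<in> F2lin n m \<Longrightarrow> F2shift n f w (F2shift n f w B) = B"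
  unfolding F2lin_def by (auto simp: F2shift_def fun_eq_iff PiE_def extensional_def)

lemma card_F2lin_fixing_snoc:
  assumes y: "y \<in> F2vec m" and vs: "set vs \<subseteq> F2vec n" and v: "v \<in> F2vec n"
    and v_indep: "v \<notin> F2span (set vs)"
  shows "card {B \<in> F2lin n m. \<forall>u\<in>set vs. B u = y}
       = 2 ^ m * card {B \<in> F2lin n m. \<forall>u\<in>set (vs @ [v]). B u = y}"
proof -
  obtain f where f: "F2functional n f" "f v" "\<forall>u\<in>set vs. \<not> f u"
    using F2functional_separating[OF finite_set vs v v_indep] by blast
  define T where "T = {B \<in> F2lin n m. \<forall>u\<in>set vs. B u = y}"
  define fibre where "fibre z = {B \<in> T. B v = z}" for z
  have shift_fibre: "F2shift n f w ` fibre z \<subseteq> fibre (F2add z w)" if "w \<in> F2vec m" for w z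
  proof
    fix B' assume "B' \<in> F2shift n f w ` fibre z"
    then obtain B where B: "B \<in> fibre z" "B' = F2shift n f w B" ..
    have "B' u = y" if "u \<in> set vs" for u
      using B that f(3) vs by (auto simp: fibre_def T_def F2shift_def)
    moreover have "B' v = F2add z w"
      using B f(2) v by (simp add: fibre_def F2shift_def)
    moreover have "B' \<in> F2lin n m"
      using B F2shift_in_F2lin[OF f(1) _ that] by (simp add: fibre_def T_def)
    ultimately show "B' \<in> fibre (F2add z w)"
      by (simp add: fibre_def T_def)
  qed
  have involution: "F2shift n f w (F2shift n f w B) = B" if "B \<in> fibre z" for w z B
    using that F2shift_F2shift[of B n m f w] by (simp add: fibre_def T_def)
  have fibre_card: "card (fibre z) = card (fibre y)" if z: "z \<in> F2vec m" for z
  proof -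
    have "bij_betw (F2shift n f (F2add y z)) (fibre y) (fibre z)"
    proof (rule bij_betw_byWitness[where f' = "F2shift n f (F2add y z)"])
      show "F2shift n f (F2add y z) ` fibre y \<subseteq> fibre z"
        using shift_fibre[OF F2add_closed[OF y z], of y] by (simp flip: F2add_assoc)
      show "F2shift n f (F2add y z) ` fibre z \<subseteq> fibre y"
        using shift_fibre[OF F2add_closed[OF y z], of z] by (simp add: F2add_ac)
      show "\<forall>B\<in>fibre y. F2shift n f (F2add y z) (F2shift n f (F2add y z) B) = B"
        using involution by blast
      show "\<forall>B\<in>fibre z. F2shift n f (F2add y z) (F2shift n f (F2add y z) B) = B"
        using involution by blast
    qed
    then show ?thesis by (rule bij_betw_same_card[symmetric])
  qed
  have "T = (\<Union>z\<in>F2vec m. fibre z)"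
    using v by (auto simp: fibre_def T_def F2lin_apply_in_F2vec)
  then have "card T = (\<Sum>z\<in>F2vec m. card (fibre z))"
    by (simp only:) (rule card_UN_disjoint, auto simp: fibre_def T_def finite_F2lin)
  also have "\<dots> = (\<Sum>z\<in>F2vec m. card (fibre y))"
    using fibre_card by simp
  also have "\<dots> = 2 ^ m * card (fibre y)"
    by (simp add: card_F2vec)
  also have "fibre y = {B \<in> F2lin n m. \<forall>u\<in>set (vs @ [v]). B u = y}"
    by (simp add: fibre_def T_def conj_ac)
  finally show ?thesis by (simp add: T_def)
qed

lemma card_F2lin_fixing:
  assumes y: "y \<in> F2vec m"
  shows "set vs \<subseteq> F2vec n \<Longrightarrow> F2indep vs \<Longrightarrow>
    card {B \<in> F2lin n m. \<forall>u\<in>set vs. B u = y} * 2 ^ (m * length vs) = card (F2lin n m)"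
proof (induction vs rule: rev_induct)
  case (snoc v vs)
  then have "card {B \<in> F2lin n m. \<forall>u\<in>set vs. B u = y}
      = 2 ^ m * card {B \<in> F2lin n m. \<forall>u\<in>set (vs @ [v]). B u = y}"
    by (intro card_F2lin_fixing_snoc[OF y]) (auto simp: F2indep_snoc)
  with snoc show ?case
    by (simp add: F2indep_snoc power_add algebra_simps)
qed simp

lemma sum_card_lists_fixed_F2lin:
  assumes y: "y \<in> F2vec m" and "finite L"
    and L: "\<And>vs. vs \<in> L \<Longrightarrow> length vs = k \<and> set vs \<subseteq> F2vec n \<and> F2indep vs"
  shows "(\<Sum>B\<in>F2lin n m. card {vs \<in> L. \<forall>u\<in>set vs. B u = y}) * 2 ^ (m * k)
       = card L * card (F2lin n m)"
proof -
  have "(\<Sum>B\<in>F2lin n m. card {vs \<in> L. \<forall>u\<in>set vs. B u = y})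
      = (\<Sum>vs\<in>L. card {B \<in> F2lin n m. \<forall>u\<in>set vs. B u = y})"
    unfolding card_eq_sum using finite_F2lin \<open>finite L\<close> by (rule sum.swap_restrict)
  also have "\<dots> * 2 ^ (m * k) = (\<Sum>vs\<in>L. card (F2lin n m))"
    unfolding sum_distrib_right using card_F2lin_fixing[OF y] L by (intro sum.cong) auto
  finally show ?thesis by simp
qed

section \<open>Counting independent tuples\<close>

lemma card_Diff_F2span_ge:
  assumes "F2zero \<notin> S" "finite S" "finite A"
  shows "card S + 1 \<le> card (S - F2span A) + 2 ^ card A"
proof -
  have "card (S \<inter> F2span A) + 1 \<le> card (F2span A)"
  proof -
    have "S \<inter> F2span A \<subseteq> F2span A - {F2zero}"
      using assms(1) by auto
    then have "card (S \<inter> F2span A) \<le> card (F2span A - {F2zero})"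
      using assms(3) by (intro card_mono) (simp_all add: finite_F2span)
    moreover have "0 < card (F2span A)"
      using assms(3) by (auto simp: card_gt_0_iff finite_F2span)
    ultimately show ?thesis
      using assms(3) by (simp add: finite_F2span)
  qed
  moreover have "card S = card (S - F2span A) + card (S \<inter> F2span A)"
    using assms(2) by (metis card_Int_Diff Int_commute add.commute)
  ultimately show ?thesis
    using card_F2span_le[OF assms(3)] by linarith
qed

lemma card_F2indep_lists_ge:
  assumes S: "F2zero \<notin> S" "finite S" "2 ^ a \<le> card S + 1" and "k \<le> a"
  shows "(\<Prod>j<k. 2 ^ a - 2 ^ j :: nat) \<le> card {vs. length vs = k \<and> set vs \<subseteq> S \<and> F2indep vs}"
  using \<open>k \<le> a\<close>
proof (induction k)
  case 0
  have "{vs. length vs = 0 \<and> set vs \<subseteq> S \<and> F2indep vs} = {[]}" by auto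
  then show ?case by simp
next
  case (Suc k)
  define L where "L j = {vs. length vs = j \<and> set vs \<subseteq> S \<and> F2indep vs}" for j
  have finite_L: "finite (L j)" for j
    by (rule finite_subset[OF _ finite_lists_length_eq[OF S(2), of j]]) (auto simp: L_def)
  define extensions where "extensions = (SIGMA vs:L k. S - F2span (set vs))"
  have extension_count: "2 ^ a - 2 ^ k \<le> card (S - F2span (set vs))" if "vs \<in> L k" for vs
  proof -
    have "2 ^ card (set vs) \<le> (2::nat) ^ k"
      using that card_length[of vs] by (auto simp: L_def intro: power_increasing)
    then show ?thesis
      using card_Diff_F2span_ge[OF S(1,2) finite_set, of vs] S(3) by linarith
  qed
  have "(\<Prod>j<Suc k. 2 ^ a - 2 ^ j :: nat) \<le> card (L k) * (2 ^ a - 2 ^ k)"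
    using Suc by (simp add: L_def)
  also have "\<dots> \<le> (\<Sum>vs\<in>L k. card (S - F2span (set vs)))"
    using sum_mono[OF extension_count] by simp
  also have "\<dots> = card extensions"
    unfolding extensions_def using finite_L S(2) by simp
  also have "\<dots> = card ((\<lambda>(vs, v). vs @ [v]) ` extensions)"
    by (rule card_image[symmetric]) (auto simp: inj_on_def)
  also have "\<dots> \<le> card (L (Suc k))"
    by (rule card_mono[OF finite_L]) (auto simp: extensions_def L_def F2indep_snoc)
  finally show ?case by (simp add: L_def)
qed

lemma sum_card_F2indep_lists_in_fibres_le:
  assumes U: "U \<subseteq> F2vec n" "card U = 2 ^ m" and y: "y \<in> F2vec m"
  shows "(\<Sum>B\<in>F2lin n m. card {vs. length vs = k \<and> set vs \<subseteq> {u \<in> U. B u = y} \<and> F2indep vs})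
       \<le> card (F2lin n m)"
proof -
  define L where "L = {vs. length vs = k \<and> set vs \<subseteq> U \<and> F2indep vs}"
  have "finite U"
    using U(2) by (metis card.infinite power_not_zero zero_neq_numeral)
  have "finite L" "card L \<le> 2 ^ (m * k)"
    using card_mono[OF finite_lists_length_eq[OF \<open>finite U\<close>], of L k]
    by (auto simp: L_def card_lists_length_eq[OF \<open>finite U\<close>] U(2) power_mult
        intro: finite_subset[OF _ finite_lists_length_eq[OF \<open>finite U\<close>]])
  have "{vs. length vs = k \<and> set vs \<subseteq> {u \<in> U. B u = y} \<and> F2indep vs}
      = {vs \<in> L. \<forall>u\<in>set vs. B u = y}" for B :: "(nat \<Rightarrow> bool) \<Rightarrow> nat \<Rightarrow> bool"
    by (auto simp: L_def)
  then have "(\<Sum>B\<in>F2lin n m. card {vs. length vs = k \<and> set vs \<subseteq> {u \<in> U. B u = y} \<and> F2indep vs})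
      * 2 ^ (m * k) = card L * card (F2lin n m)"
    using U(1) by (simp only:) (intro sum_card_lists_fixed_F2lin[OF y \<open>finite L\<close>], auto simp: L_def)
  also have "\<dots> \<le> card (F2lin n m) * 2 ^ (m * k)"
    using mult_le_mono1[OF \<open>card L \<le> 2 ^ (m * k)\<close>] by (simp add: mult.commute)
  finally show ?thesis
    by simp
qed

section \<open>The constant \<open>\<gamma>\<close>\<close>

lemma gamma2_factor_bounds: "0 < 1 - (1/2::real) ^ Suc j" "1 - (1/2::real) ^ Suc j \<le> 1"
  using power_le_one[of "1/2::real" j] by simp_all

lemma convergent_prod_gamma2: "convergent_prod (\<lambda>j. 1 - (1/2::real) ^ Suc j)"
proof -
  have "convergent_prod (\<lambda>j. 1 + (- ((1/2::real) ^ Suc j)))"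
  proof (rule summable_imp_convergent_prod_real)
    show "summable (\<lambda>j. \<bar>- ((1/2::real) ^ Suc j)\<bar>)"
      by (simp add: summable_geometric)
    show "- ((1/2::real) ^ Suc j) \<noteq> -1" for j
      using gamma2_factor_bounds(1)[of j] by linarith
  qed
  then show ?thesis by simp
qed

lemma gamma2_pos: "0 < gamma2"
  unfolding gamma2_def by (rule less_0_prodinf[OF convergent_prod_gamma2 gamma2_factor_bounds(1)])

lemma gamma2_le_prod: "gamma2 \<le> (\<Prod>j<a. 1 - (1/2::real) ^ Suc j)"
  unfolding gamma2_def
proof (rule prodinf_le_const[OF convergent_prod_gamma2])
  fix n assume "a \<le> n"
  then have "(\<Prod>j<n. 1 - (1/2::real) ^ Suc j)
      = (\<Prod>j<a. 1 - (1/2::real) ^ Suc j) * (\<Prod>j\<in>{a..<n}. 1 - (1/2::real) ^ Suc j)"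
    by (metis prod.atLeastLessThan_concat lessThan_atLeast0 zero_le)
  also have "\<dots> \<le> (\<Prod>j<a. 1 - (1/2::real) ^ Suc j)"
    using gamma2_factor_bounds
    by (intro mult_right_le_one_le prod_le_1 prod_nonneg) (auto intro: less_imp_le)
  finally show "(\<Prod>j<n. 1 - (1/2::real) ^ Suc j) \<le> (\<Prod>j<a. 1 - (1/2::real) ^ Suc j)" .
qed

lemma gamma2_mult_pow2_le_prod: "gamma2 * 2 ^ (a\<^sup>2) \<le> real (\<Prod>j<a. 2 ^ a - 2 ^ j :: nat)"
proof -
  have "real (\<Prod>j<a. 2 ^ a - 2 ^ j :: nat) = (\<Prod>j<a. 2 ^ a * (1 - (1/2::real) ^ (a - j)))"
  proof (simp add: of_nat_diff power_increasing, rule prod.cong[OF refl])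
    fix j assume "j \<in> {..<a}"
    then have "(2::real) ^ a = 2 ^ j * 2 ^ (a - j)" by (simp flip: power_add)
    then show "(2::real) ^ a - 2 ^ j = 2 ^ a * (1 - (1/2) ^ (a - j))"
      by (simp add: algebra_simps power_one_over)
  qed
  also have "\<dots> = 2 ^ (a\<^sup>2) * (\<Prod>j<a. 1 - (1/2::real) ^ (a - j))"
    by (simp add: prod.distrib power_mult power2_eq_square)
  also have "(\<Prod>j<a. 1 - (1/2::real) ^ (a - j)) = (\<Prod>j<a. 1 - (1/2::real) ^ Suc j)"
    by (subst prod.nat_diff_reindex[symmetric]) (auto intro!: prod.cong simp: Suc_diff_Suc)
  finally show ?thesis
    using gamma2_le_prod[of a] by (simp add: mult.commute)
qed

lemma inverse_prod_pow2_diff_le: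
  "inverse (real (\<Prod>j<a. 2 ^ a - 2 ^ j :: nat)) \<le> inverse gamma2 * 2 powr - real (a\<^sup>2)"
proof -
  have "inverse (real (\<Prod>j<a. 2 ^ a - 2 ^ j :: nat)) \<le> inverse (gamma2 * 2 ^ (a\<^sup>2))"
    using gamma2_mult_pow2_le_prod gamma2_pos by (intro le_imp_inverse_le) auto
  also have "\<dots> = inverse gamma2 * 2 powr - real (a\<^sup>2)"
    by (simp add: powr_minus powr_realpow flip: of_nat_power)
  finally show ?thesis .
qed

lemma prob_pmf_of_set_le_inverse:
  fixes N :: "'a \<Rightarrow> nat"
  assumes "finite F" "F \<noteq> {}" "0 < P" "\<And>x. x \<in> F \<inter> E \<Longrightarrow> P \<le> N x" "(\<Sum>x\<in>F. N x) \<le> card F"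
  shows "measure_pmf.prob (pmf_of_set F) E \<le> inverse (real P)"
proof -
  have "card (F \<inter> E) * P \<le> (\<Sum>x\<in>F \<inter> E. N x)"
    using sum_mono[of "F \<inter> E" "\<lambda>_. P" N] assms(4) by (simp add: mult.commute)
  also have "\<dots> \<le> (\<Sum>x\<in>F. N x)"
    using assms(1) by (intro sum_mono2) auto
  finally have "real (card (F \<inter> E)) * real P \<le> real (card F)"
    using assms(5) by (metis of_nat_le_iff of_nat_mult order_trans)
  then show ?thesis
    using assms(1-3) by (simp add: measure_pmf_of_set field_simps card_gt_0_iff)
qed

theorem corollary2p3:
  fixes n m a :: nat and U :: "(nat \<Rightarrow> bool) set" and y :: "nat \<Rightarrow> bool"
  assumes "U \<subseteq> F2vec n - {F2zero}"
    and "card U = 2 ^ m"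
    and "y \<in> F2vec m"
    and "a \<ge> 1"
  shows "measure_pmf.prob (pmf_of_set (F2lin n m))
           {B. int (card {u \<in> U. B u = y}) > 2 ^ a - 2}
         \<le> inverse gamma2 * 2 powr (- real (a ^ 2))"
proof -
  define N where "N B = card {vs. length vs = a \<and> set vs \<subseteq> {u \<in> U. B u = y} \<and> F2indep vs}"
    for B :: "(nat \<Rightarrow> bool) \<Rightarrow> nat \<Rightarrow> bool"
  have "finite U"
    using assms(2) by (metis card.infinite power_not_zero zero_neq_numeral)
  have "(\<Prod>j<a. 2 ^ a - 2 ^ j :: nat) \<le> N B"
    if "B \<in> F2lin n m \<inter> {B. int (card {u \<in> U. B u = y}) > 2 ^ a - 2}" for B
  proof -
    have "int (2 ^ a) \<le> int (card {u \<in> U. B u = y} + 1)"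
      using that by simp
    then have "2 ^ a \<le> card {u \<in> U. B u = y} + 1"
      by (simp only: of_nat_le_iff)
    then show ?thesis
      unfolding N_def using assms(1) \<open>finite U\<close> by (intro card_F2indep_lists_ge) auto
  qed
  moreover have "(\<Sum>B\<in>F2lin n m. N B) \<le> card (F2lin n m)"
    unfolding N_def using assms(1-3) by (intro sum_card_F2indep_lists_in_fibres_le) auto
  moreover have "0 < (\<Prod>j<a. 2 ^ a - 2 ^ j :: nat)"
    by (auto intro!: prod_pos)
  ultimately have "measure_pmf.prob (pmf_of_set (F2lin n m)) {B. int (card {u \<in> U. B u = y}) > 2 ^ a - 2}
      \<le> inverse (real (\<Prod>j<a. 2 ^ a - 2 ^ j :: nat))"
    by (intro prob_pmf_of_set_le_inverse[OF finite_F2lin F2lin_nonempty])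
  then show ?thesis
    using inverse_prod_pow2_diff_le by (rule order_trans)
qed

end
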